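(* Let $m_1,m_2,n_1\in\mathbb Z_+$. Then $$|\mathcal S(m_1,m_2,n_1)|=|\mathcal S(m_1-1,m_2,n_1-1)|+|{}^1\mathcal S(m_1+1,m_2-1,n_1-1)|+|{}^2\mathcal S(m_1-1,m_2,n_1-1)|+|{}^3\mathcal S(m_1,m_2,n_1)|,$$ where $|{}^1\mathcal S|:=|R^1|+|R^2|$, $|{}^2\mathcal S|:=|Q^1|+|Q^2|$, $|{}^3\mathcal S|:=|U^1|+|U^2|$ (all evaluated at the same parameters).
   Context: (Type $G_2$ with $\mu(h_2)=0$: here $m_i=\lambda(h_i)$, $n_1=\mu(h_1)$, and $\mathcal S(m_1,m_2,n_1)$ is the lattice point set $\mathcal S^G_{\lambda,\mu}$ of the paper's polytope with $n_2=0$.) For arbitrary integers $m_1,m_2,n_1$ define: $\mathcal S(m_1,m_2,n_1)=\{(a,b,c,d,e,f)\in\mathbb Z_+^6: a\le\min\{m_1,n_1\},\ b\le m_2,\ f\le\min\{m_2,0\},\ b+e-a\le m_2,\ a+c+d\le\min\{m_1+m_2,n_1\},\ a+b+c\le\min\{m_1+m_2,n_1\},\ a+b+c+d\le\min\{m_1+2m_2,n_1\},\ b+c+d+e\le\min\{m_1+2m_2,n_1\},\ 2(a+c)+3d-b\le m_1+n_1,\ 2(a+c)+b+d\le m_1+n_1\}$; $R^1(m_1,m_2,n_1)=\{(b,c,d,e)\in\mathbb Z_+^4: b+e\le m_2,\ c+d\le m_1+m_2,\ b+c\le m_1+m_2,\ b+c+d+e\le n_1,\ 2c+3d-b\le m_1+n_1,\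 b+2c+d\le m_1+n_1\}$; $R^2(m_1,m_2,n_1)=\{(a,b,c,d)\in\mathbb Z_+^4: a<m_1,\ b\le m_2,\ a+c+d<m_1+m_2,\ a+b+c<m_1+m_2,\ a+b+c+d<n_1,\ 2a+2c+3d-b<m_1+n_1-1,\ 2a+b+2c+d<m_1+n_1-1\}$; $Q^1(m_1,m_2,n_1)=\{(a,c,d)\in\mathbb Z_+^3: a\le m_1,\ a+c+d\le\min\{m_1+m_2,n_1\},\ 2(a+c)+3d\le m_1+n_1\}$; $Q^2(m_1,m_2,n_1)=\{(a,b,c)\in\mathbb Z_+^3: a\le m_1,\ a+b+c\le\min\{m_1+m_2-1,n_1-1\},\ b\le m_2-1,\ 2(a+c)+b\le m_1+n_1-1\}$; $U^1(m_1,m_2,n_1)=\{(c,d)\in\mathbb Z_+^2: c+d\le\min\{m_1+m_2,n_1\},\ 2c+3d\le m_1+n_1\}$; $U^2(m_1,m_2,n_1)=\{(b,c)\in\mathbb Z_+^2: b+c<\min\{m_1+m_2,n_1\},\ b<m_2,\ 2c+b<m_1+n_1\}$. *)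

theory Defs
  imports Main
begin

text \<open>Lattice point sets; Z_+ means nonnegative integers. Parameters are arbitrary integers.\<close>

definition S_set :: "int \<Rightarrow> int \<Rightarrow> int \<Rightarrow> (int \<times> int \<times> int \<times> int \<times> int \<times> int) set" where
  "S_set m1 m2 n1 = {(a,b,c,d,e,f). 0 \<le> a \<and> 0 \<le> b \<and> 0 \<le> c \<and> 0 \<le> d \<and> 0 \<le> e \<and> 0 \<le> f \<and>
     a \<le> min m1 n1 \<and> b \<le> m2 \<and> f \<le> min m2 0 \<and> b + e - a \<le> m2 \<and>
     a + c + d \<le> min (m1 + m2) n1 \<and> a + b + c \<le> min (m1 + m2) n1 \<and>
     a + b + c + d \<le> min (m1 + 2*m2) n1 \<and> b + c + d + e \<le> min (m1 + 2*m2) n1 \<and>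
     2*(a + c) + 3*d - b \<le> m1 + n1 \<and> 2*(a + c) + b + d \<le> m1 + n1}"

definition R1_set :: "int \<Rightarrow> int \<Rightarrow> int \<Rightarrow> (int \<times> int \<times> int \<times> int) set" where
  "R1_set m1 m2 n1 = {(b,c,d,e). 0 \<le> b \<and> 0 \<le> c \<and> 0 \<le> d \<and> 0 \<le> e \<and>
     b + e \<le> m2 \<and> c + d \<le> m1 + m2 \<and> b + c \<le> m1 + m2 \<and> b + c + d + e \<le> n1 \<and>
     2*c + 3*d - b \<le> m1 + n1 \<and> b + 2*c + d \<le> m1 + n1}"

definition R2_set :: "int \<Rightarrow> int \<Rightarrow> int \<Rightarrow> (int \<times> int \<times> int \<times> int) set" where
  "R2_set m1 m2 n1 = {(a,b,c,d). 0 \<le> a \<and> 0 \<le> b \<and> 0 \<le> c \<and> 0 \<le> d \<and>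
     a < m1 \<and> b \<le> m2 \<and> a + c + d < m1 + m2 \<and> a + b + c < m1 + m2 \<and> a + b + c + d < n1 \<and>
     2*a + 2*c + 3*d - b < m1 + n1 - 1 \<and> 2*a + b + 2*c + d < m1 + n1 - 1}"

definition Q1_set :: "int \<Rightarrow> int \<Rightarrow> int \<Rightarrow> (int \<times> int \<times> int) set" where
  "Q1_set m1 m2 n1 = {(a,c,d). 0 \<le> a \<and> 0 \<le> c \<and> 0 \<le> d \<and>
     a \<le> m1 \<and> a + c + d \<le> min (m1 + m2) n1 \<and> 2*(a + c) + 3*d \<le> m1 + n1}"

definition Q2_set :: "int \<Rightarrow> int \<Rightarrow> int \<Rightarrow> (int \<times> int \<times> int) set" where
  "Q2_set m1 m2 n1 = {(a,b,c). 0 \<le> a \<and> 0 \<le> b \<and> 0 \<le> c \<and>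
     a \<le> m1 \<and> a + b + c \<le> min (m1 + m2 - 1) (n1 - 1) \<and> b \<le> m2 - 1 \<and> 2*(a + c) + b \<le> m1 + n1 - 1}"

definition U1_set :: "int \<Rightarrow> int \<Rightarrow> int \<Rightarrow> (int \<times> int) set" where
  "U1_set m1 m2 n1 = {(c,d). 0 \<le> c \<and> 0 \<le> d \<and>
     c + d \<le> min (m1 + m2) n1 \<and> 2*c + 3*d \<le> m1 + n1}"

definition U2_set :: "int \<Rightarrow> int \<Rightarrow> int \<Rightarrow> (int \<times> int) set" where
  "U2_set m1 m2 n1 = {(b,c). 0 \<le> b \<and> 0 \<le> c \<and>
     b + c < min (m1 + m2) n1 \<and> b < m2 \<and> 2*c + b < m1 + n1}"

end

theory Submission
  imports Defs
begin

text \<open>Every point of \<open>S_set m1 m2 n1\<close> has \<open>f = 0\<close>, and over a fixed projection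
  \<open>(a,b,c,d)\<close> the coordinate \<open>e\<close> ranges over an interval with upper end
  \<open>min (m2 + a - b) (M - b - c - d)\<close>, where \<open>M = min (m1 + 2 m2) n1\<close>. Points with \<open>e\<close> below
  this maximum and \<open>a \<ge> 1\<close> are those of \<open>S_set (m1-1) m2 (n1-1)\<close> with \<open>a\<close> raised by one, and
  those with \<open>a = 0\<close> are the points of \<open>R1_set (m1+1) (m2-1) (n1-1)\<close>. Points with maximal \<open>e\<close>
  correspond to the projection of \<open>S_set\<close>. Splitting the projection according to \<open>b = 0\<close>,
  \<open>d = 0\<close> and \<open>a = 0\<close>, and lowering the non-zero ones among \<open>a, b, d\<close> by one, gives the
  \<open>Q1\<close> and \<open>U1\<close> sets (for \<open>b = 0\<close>), the \<open>Q2\<close> and \<open>U2\<close> sets (for \<open>b > 0 = d\<close>), and the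
  \<open>R2\<close> set (for \<open>b, d > 0\<close>).\<close>

definition S_proj_set :: "int \<Rightarrow> int \<Rightarrow> int \<Rightarrow> (int \<times> int \<times> int \<times> int) set" where
  "S_proj_set m1 m2 n1 = {(a,b,c,d). 0 \<le> a \<and> 0 \<le> b \<and> 0 \<le> c \<and> 0 \<le> d \<and>
     a \<le> min m1 n1 \<and> b \<le> m2 \<and>
     a + c + d \<le> min (m1 + m2) n1 \<and> a + b + c \<le> min (m1 + m2) n1 \<and>
     a + b + c + d \<le> min (m1 + 2*m2) n1 \<and>
     2*(a + c) + 3*d - b \<le> m1 + n1 \<and> 2*(a + c) + b + d \<le> m1 + n1}"

lemma S_set_iff:
  "(a,b,c,d,e,f) \<in> S_set m1 m2 n1 \<longleftrightarrow>
     (a,b,c,d) \<in> S_proj_set m1 m2 n1 \<and> 0 \<le> e \<and> b + e - a \<le> m2 \<and>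
     b + c + d + e \<le> min (m1 + 2*m2) n1 \<and> 0 \<le> f \<and> f \<le> min m2 0"
  unfolding S_set_def S_proj_set_def by blast

lemma finite_S_set: "finite (S_set m1 m2 n1)"
proof (rule finite_subset)
  show "S_set m1 m2 n1 \<subseteq> {0..n1} \<times> {0..m2} \<times> {0..n1} \<times> {0..n1} \<times> {0..n1} \<times> {0..0}"
    unfolding S_set_def by auto
qed auto

lemma finite_S_proj_set: "finite (S_proj_set m1 m2 n1)"
proof (rule finite_subset)
  show "S_proj_set m1 m2 n1 \<subseteq> {0..n1} \<times> {0..m2} \<times> {0..n1} \<times> {0..n1}"
    unfolding S_proj_set_def by auto
qed auto

lemma card_filter_split:
  assumes "finite A"
  shows "card A = card {x \<in> A. P x} + card {x \<in> A. \<not> P x}"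
proof -
  have "A \<inter> {x. P x} = {x \<in> A. P x}" and "A - {x. P x} = {x \<in> A. \<not> P x}"
    by auto
  then show ?thesis
    using card_Int_Diff[OF assms, of "{x. P x}"] by simp
qed

lemma S_set_e_maximal_eq_image:
  fixes m1 m2 n1 :: int
  assumes "0 \<le> m2"
  defines "M \<equiv> min (m1 + 2*m2) n1"
  shows "{(a,b,c,d,e,f) \<in> S_set m1 m2 n1. m2 \<le> b + e - a \<or> M \<le> b + c + d + e}
       = (\<lambda>(a,b,c,d). (a, b, c, d, min (m2 + a - b) (M - b - c - d), 0)) ` S_proj_set m1 m2 n1"
    (is "?top = ?g ` _")
proof (intro set_eqI iffI)
  fix x assume "x \<in> ?top"
  then obtain a b c d e f where x: "x = (a,b,c,d,e,f)" and "(a,b,c,d,e,f) \<in> S_set m1 m2 n1"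
    and "m2 \<le> b + e - a \<or> M \<le> b + c + d + e"
    by auto
  then have "(a,b,c,d) \<in> S_proj_set m1 m2 n1" and "x = ?g (a,b,c,d)"
    unfolding S_set_iff M_def by auto
  then show "x \<in> ?g ` S_proj_set m1 m2 n1" by blast
next
  fix x assume "x \<in> ?g ` S_proj_set m1 m2 n1"
  then obtain a b c d where x: "x = ?g (a,b,c,d)" and abcd: "(a,b,c,d) \<in> S_proj_set m1 m2 n1"
    by auto
  then have "b \<le> m2 + a" and "b + c + d \<le> M"
    by (auto simp: S_proj_set_def M_def)
  with abcd assms show "x \<in> ?top"
    unfolding x S_set_iff M_def by auto
qed

lemma card_S_set_split:
  fixes m1 m2 n1 :: int
  assumes "0 \<le> m1" and "0 \<le> m2"
  shows "card (S_set m1 m2 n1) =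
      card (S_set (m1 - 1) m2 (n1 - 1)) + card (R1_set (m1 + 1) (m2 - 1) (n1 - 1))
    + card (S_proj_set m1 m2 n1)"
proof -
  define M where "M = min (m1 + 2*m2) n1"
  let ?S = "S_set m1 m2 n1"
  let ?P = "\<lambda>(a,b,c,d,e,f). b + e - a < m2 \<and> b + c + d + e < M"
  let ?low = "{x \<in> ?S. ?P x}"
  have "finite ?low"
    using finite_S_set by simp
  have "card ?S = card ?low + card {x \<in> ?S. \<not> ?P x}"
    using card_filter_split[OF finite_S_set] .
  also have "{x \<in> ?S. \<not> ?P x} = {(a,b,c,d,e,f) \<in> ?S. m2 \<le> b + e - a \<or> M \<le> b + c + d + e}"
    by auto
  also have "card \<dots> = card (S_proj_set m1 m2 n1)"
    unfolding S_set_e_maximal_eq_image[of m2 m1 n1, OF assms(2), folded M_def]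
    by (rule card_image) (auto simp: inj_on_def)
  also have "card ?low = card {x \<in> ?low. (\<lambda>(a,b,c,d,e,f). 1 \<le> a) x}
      + card {x \<in> ?low. \<not> (\<lambda>(a,b,c,d,e,f). 1 \<le> a) x}"
    using card_filter_split[OF \<open>finite ?low\<close>] .
  also have "card {x \<in> ?low. (\<lambda>(a,b,c,d,e,f). 1 \<le> a) x} = card (S_set (m1 - 1) m2 (n1 - 1))"
    by (rule bij_betw_same_card[OF bij_betw_byWitness[where f="\<lambda>(a,b,c,d,e,f). (a-1,b,c,d,e,f)"
         and f'="\<lambda>(a,b,c,d,e,f). (a+1,b,c,d,e,f)"]])
       (auto simp: S_set_def M_def)
  also have "card {x \<in> ?low. \<not> (\<lambda>(a,b,c,d,e,f). 1 \<le> a) x} = card (R1_set (m1 + 1) (m2 - 1) (n1 - 1))"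
    by (rule bij_betw_same_card[OF bij_betw_byWitness[where f="\<lambda>(a,b,c,d,e,f). (b,c,d,e)"
         and f'="\<lambda>(b,c,d,e). (0,b,c,d,e,0)"]])
       (use assms in \<open>auto simp: S_set_def R1_set_def M_def\<close>)
  finally show ?thesis by simp
qed

lemma card_S_proj_set_split:
  fixes m1 m2 n1 :: int
  assumes "0 \<le> m1" and "0 \<le> m2"
  shows "card (S_proj_set m1 m2 n1) =
      card (R2_set (m1 + 1) (m2 - 1) (n1 - 1))
    + (card (Q1_set (m1 - 1) m2 (n1 - 1)) + card (Q2_set (m1 - 1) m2 (n1 - 1)))
    + (card (U1_set m1 m2 n1) + card (U2_set m1 m2 n1))"
proof -
  let ?S = "S_proj_set m1 m2 n1"
  let ?a_pos = "\<lambda>(a::int,b::int,c::int,d::int). 1 \<le> a"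
  let ?b0 = "{(a,b,c,d) \<in> ?S. b = 0}"
  let ?b_pos = "{(a,b,c,d) \<in> ?S. b \<noteq> 0}"
  let ?d0 = "{(a,b,c,d) \<in> ?b_pos. d = 0}"
  have fin: "finite ?b0" "finite ?b_pos" "finite ?d0"
    using finite_S_proj_set[of m1 m2 n1] by (auto intro: finite_subset)
  have "card ?S = card ?b0 + card ?b_pos"
    using card_filter_split[OF finite_S_proj_set, where P="\<lambda>(a,b,c,d). b = 0"]
    by (simp add: split_def)
  also have "card ?b0 = card {x \<in> ?b0. ?a_pos x} + card {x \<in> ?b0. \<not> ?a_pos x}"
    using card_filter_split[OF fin(1)] .
  also have "card {x \<in> ?b0. ?a_pos x} = card (Q1_set (m1 - 1) m2 (n1 - 1))"
    by (rule bij_betw_same_card[OF bij_betw_byWitness[where f="\<lambda>(a,b,c,d). (a-1,c,d)"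
         and f'="\<lambda>(a,c,d). (a+1,0,c,d)"]])
       (use assms in \<open>auto simp: S_proj_set_def Q1_set_def\<close>)
  also have "card {x \<in> ?b0. \<not> ?a_pos x} = card (U1_set m1 m2 n1)"
    by (rule bij_betw_same_card[OF bij_betw_byWitness[where f="\<lambda>(a,b,c,d). (c,d)"
         and f'="\<lambda>(c,d). (0,0,c,d)"]])
       (use assms in \<open>auto simp: S_proj_set_def U1_set_def\<close>)
  also have "card ?b_pos = card ?d0 + card {(a,b,c,d) \<in> ?b_pos. d \<noteq> 0}"
    using card_filter_split[OF fin(2), where P="\<lambda>(a,b,c,d). d = 0"]
    by (simp add: split_def)
  also have "card ?d0 = card {x \<in> ?d0. ?a_pos x} + card {x \<in> ?d0. \<not> ?a_pos x}"
    using card_filter_split[OF fin(3)] .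
  also have "card {x \<in> ?d0. ?a_pos x} = card (Q2_set (m1 - 1) m2 (n1 - 1))"
    by (rule bij_betw_same_card[OF bij_betw_byWitness[where f="\<lambda>(a,b,c,d). (a-1,b-1,c)"
         and f'="\<lambda>(a,b,c). (a+1,b+1,c,0)"]])
       (use assms in \<open>auto simp: S_proj_set_def Q2_set_def\<close>)
  also have "card {x \<in> ?d0. \<not> ?a_pos x} = card (U2_set m1 m2 n1)"
    by (rule bij_betw_same_card[OF bij_betw_byWitness[where f="\<lambda>(a,b,c,d). (b-1,c)"
         and f'="\<lambda>(b,c). (0,b+1,c,0)"]])
       (use assms in \<open>auto simp: S_proj_set_def U2_set_def\<close>)
  also have "card {(a,b,c,d) \<in> ?b_pos. d \<noteq> 0} = card (R2_set (m1 + 1) (m2 - 1) (n1 - 1))"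
    by (rule bij_betw_same_card[OF bij_betw_byWitness[where f="\<lambda>(a,b,c,d). (a,b-1,c,d-1)"
         and f'="\<lambda>(a,b,c,d). (a,b+1,c,d+1)"]])
       (use assms in \<open>auto simp: S_proj_set_def R2_set_def\<close>)
  finally show ?thesis by simp
qed

theorem lemma6p5:
  fixes m1 m2 n1 :: int
  assumes "0 \<le> m1" and "0 \<le> m2" and "0 \<le> n1"
  shows "card (S_set m1 m2 n1) =
           card (S_set (m1 - 1) m2 (n1 - 1))
         + (card (R1_set (m1 + 1) (m2 - 1) (n1 - 1)) + card (R2_set (m1 + 1) (m2 - 1) (n1 - 1)))
         + (card (Q1_set (m1 - 1) m2 (n1 - 1)) + card (Q2_set (m1 - 1) m2 (n1 - 1)))
         + (card (U1_set m1 m2 n1) + card (U2_set m1 m2 n1))"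
  using card_S_set_split[OF assms(1,2)] card_S_proj_set_split[OF assms(1,2)] by simp

end
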